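(* Let $\mathcal B$ be a BMC with $\mathbf c^*_q<\infty$ for all $q\in\mathcal T$, and consider the Q-learning process with learning rates $\lambda_i\in[0,1]$ satisfying $\sum_{i=0}^\infty\lambda_i=\infty$ and a fixed selection distribution with $p_q\ge p_{\min}>0$ for all $q$. Then for every initial vector $Q_0\ge\mathbf 0$, $\lim_{i\to\infty}\mathbb E Q_i=\mathbf c^*$.
   Context: A branching Markov chain (BMC) is $\mathcal B=(\mathcal T,p,c)$ with $\mathcal T$ a finite set of types, $p(q)$ for each $q\in\mathcal T$ a probability distribution with finite support over finite lists $\mathcal T^*$ of types (the offspring distribution), and $c:\mathcal T\to\mathbb R_{>0}$ a strictly positive cost. For a list $\alpha$, $|\alpha|$ is its length and $\alpha_i$ its $i$-th element. $\mathbf c^*_q\in[0,\infty]$ denotes the expected total cost until extinction starting from the single entity $q$; equivalently $\mathbf c^*$ is the least fixed point in $[0,\infty]^{\mathcal T}$ of $F(\mathbf x)_q=c(q)+\sum_\alpha p(q)(\alpha)\sum_{i=1}^{|\alpha|}\mathbf x_{\alpha_i}$. Q-learning process for a BMC: given deterministic learning rates $\lambda_i\in[0,1]$, a probability distribution $(p_q)_{q\in\mathcal T}$ and an initial vector $Q_0\in\mathbb R_{\ge0}^{\mathcal T}$, at each step $i=0,1,2,\dots$ a type $q_i$ is selected with probability $p_{q_i}$ independently of all previous randomness, then a list $\beta^i$ is drawn from $p(q_i)$ independently, and $Q_{i+1}(q_i)=(1-\lambda_i)Q_i(q_i)+\lambda_i\big(c(q_i)+\sum_{j=1}^{|\beta^i|}Q_i(\beta^i_j)\big)$,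 while $Q_{i+1}(q)=Q_i(q)$ for $q\ne q_i$. $\mathbb E Q_i$ is the componentwise expectation. *)

theory Defs
  imports "HOL-Probability.Probability"
begin

text \<open>A branching Markov chain over a finite type of types 't:
  offspring distribution p :: 't => 't list pmf, cost c :: 't => real.\<close>

definition bmc :: "('t::finite \<Rightarrow> 't list pmf) \<Rightarrow> ('t \<Rightarrow> real) \<Rightarrow> bool" where
  "bmc p c \<longleftrightarrow> (\<forall>q. finite (set_pmf (p q))) \<and> (\<forall>q. c q > 0)"

definition bmc_F :: "('t \<Rightarrow> 't list pmf) \<Rightarrow> ('t \<Rightarrow> real) \<Rightarrow> ('t \<Rightarrow> ennreal) \<Rightarrow> ('t \<Rightarrow> ennreal)" where
  "bmc_F p c x = (\<lambda>q. ennreal (c q) + (\<integral>\<^sup>+ \<alpha>. (\<Sum>i<length \<alpha>. x (\<alpha> ! i)) \<partial>measure_pmf (p q)))"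

text \<open>Expected total cost until extinction: least fixed point of F.\<close>
definition cstar :: "('t \<Rightarrow> 't list pmf) \<Rightarrow> ('t \<Rightarrow> real) \<Rightarrow> ('t \<Rightarrow> ennreal)" where
  "cstar p c = lfp (bmc_F p c)"

text \<open>Distribution of the random vector Q_i of the Q-learning process
  (selection distribution P, learning rates lr, initial vector Q0).\<close>
fun qdist :: "('t \<Rightarrow> 't list pmf) \<Rightarrow> ('t \<Rightarrow> real) \<Rightarrow> 't pmf \<Rightarrow> (nat \<Rightarrow> real)
     \<Rightarrow> ('t \<Rightarrow> real) \<Rightarrow> nat \<Rightarrow> ('t \<Rightarrow> real) pmf" where
  "qdist p c P lr Q0 0 = return_pmf Q0"
| "qdist p c P lr Q0 (Suc i) =
     bind_pmf (qdist p c P lr Q0 i) (\<lambda>Q.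
       bind_pmf P (\<lambda>q.
         map_pmf (\<lambda>\<beta>. Q(q := (1 - lr i) * Q q + lr i * (c q + (\<Sum>j<length \<beta>. Q (\<beta> ! j)))))
           (p q)))"

definition EQ :: "('t \<Rightarrow> 't list pmf) \<Rightarrow> ('t \<Rightarrow> real) \<Rightarrow> 't pmf \<Rightarrow> (nat \<Rightarrow> real)
     \<Rightarrow> ('t \<Rightarrow> real) \<Rightarrow> nat \<Rightarrow> 't \<Rightarrow> real" where
  "EQ p c P lr Q0 i q = measure_pmf.expectation (qdist p c P lr Q0 i) (\<lambda>Q. Q q)"

end

theory Submission
  imports Defs
begin

(* In expectation, a Q-learning step moves the selected coordinate a fraction lr i of the
   way towards the Bellman value c q + (M x) q, where M is the mean offspring matrix; so E Q_i
   obeys a deterministic damped fixpoint iteration whose fixpoint c* satisfies c* = c + M c*.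
   As c > 0, M c* = c* - c \<le> (1 - \<delta>) c* for some \<delta> > 0, hence the error E Q_i - c*, measured
   in the sup norm weighted by c*, shrinks by at least 1 - pmin \<delta> lr i in step i.
   Since the learning rates are not summable, the product of these factors tends to 0. *)

lemma prod_one_minus_le_exp_neg_sum:
  fixes f :: "nat \<Rightarrow> real"
  assumes "\<forall>k. f k \<le> 1"
  shows "(\<Prod>k<n. 1 - f k) \<le> exp (- (\<Sum>k<n. f k))"
proof (induction n)
  case (Suc n)
  have "(\<Prod>k<Suc n. 1 - f k) = (\<Prod>k<n. 1 - f k) * (1 - f n)" by simp
  also have "\<dots> \<le> exp (- (\<Sum>k<n. f k)) * exp (- f n)"
    using Suc.IH assms exp_ge_add_one_self[of "- f n"] by (intro mult_mono) auto
  also have "\<dots> = exp (- (\<Sum>k<Suc n. f k))" by (simp add: exp_add[symmetric])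
  finally show ?case .
qed simp

lemma partial_sums_tendsto_at_top:
  fixes f :: "nat \<Rightarrow> real"
  assumes nonneg: "\<forall>k. 0 \<le> f k" and "\<not> summable f"
  shows "filterlim (\<lambda>n. \<Sum>k<n. f k) at_top sequentially"
  unfolding filterlim_at_top
proof
  fix Z
  obtain n where n: "Z < (\<Sum>k<n. f k)"
    using summableI_nonneg_bounded[of f Z] nonneg assms(2) by (meson not_le)
  have "Z \<le> (\<Sum>k<m. f k)" if "n \<le> m" for m
    using n sum_mono2[of "{..<m}" "{..<n}" f] nonneg that by fastforce
  then show "\<forall>\<^sub>F m in sequentially. Z \<le> (\<Sum>k<m. f k)"
    by (rule eventually_sequentiallyI)
qed

lemma prod_one_minus_tendsto_zero:
  fixes f :: "nat \<Rightarrow> real"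
  assumes f: "\<forall>k. 0 \<le> f k \<and> f k \<le> 1" and "\<not> summable f"
  shows "(\<lambda>n. \<Prod>k<n. 1 - f k) \<longlonglongrightarrow> 0"
proof (rule tendsto_sandwich[of "\<lambda>_. 0" _ _ "\<lambda>n. exp (- (\<Sum>k<n. f k))"])
  show "\<forall>\<^sub>F n in sequentially. 0 \<le> (\<Prod>k<n. 1 - f k)"
    using f by (simp add: prod_nonneg)
  show "\<forall>\<^sub>F n in sequentially. (\<Prod>k<n. 1 - f k) \<le> exp (- (\<Sum>k<n. f k))"
    using f by (simp add: prod_one_minus_le_exp_neg_sum)
  have "filterlim (\<lambda>n. - (\<Sum>k<n. f k)) at_bot sequentially"
    using partial_sums_tendsto_at_top assms by (simp add: filterlim_uminus_at_top)
  then show "(\<lambda>n. exp (- (\<Sum>k<n. f k))) \<longlonglongrightarrow> 0"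
    by (rule filterlim_compose[OF exp_at_bot])
qed simp

(* Since the offspring term of y equals y - c \<le> (1 - \<delta>) y, averaging with the
   offspring term shrinks the y-weighted error by the factor 1 - l \<delta>. *)
lemma damped_update_error_bound:
  fixes m :: "'t::finite \<Rightarrow> 't \<Rightarrow> real"
  assumes y_fix: "y q = c q + (\<Sum>r\<in>UNIV. m q r * y r)" and m: "\<forall>r. 0 \<le> m q r"
    and \<delta>: "\<delta> * y q \<le> c q" and e: "\<forall>r. \<bar>e r\<bar> \<le> B * y r" and "0 \<le> B"
    and l: "0 \<le> l" "l \<le> 1"
  shows "\<bar>(1 - l) * e q + l * (\<Sum>r\<in>UNIV. m q r * e r)\<bar> \<le> (1 - l * \<delta>) * B * y q"
proof -
  have "\<bar>\<Sum>r\<in>UNIV. m q r * e r\<bar> \<le> (\<Sum>r\<in>UNIV. m q r * (B * y r))"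
    using m e by (intro order.trans[OF sum_abs] sum_mono) (simp add: abs_mult mult_left_mono)
  also have "\<dots> = B * (y q - c q)"
    using y_fix by (simp add: sum_distrib_left mult_ac)
  also have "\<dots> \<le> B * ((1 - \<delta>) * y q)"
    using \<delta> \<open>0 \<le> B\<close> by (intro mult_left_mono) (auto simp: algebra_simps)
  finally have offspring: "\<bar>\<Sum>r\<in>UNIV. m q r * e r\<bar> \<le> B * ((1 - \<delta>) * y q)" .
  have "\<bar>(1 - l) * e q + l * (\<Sum>r\<in>UNIV. m q r * e r)\<bar>
          \<le> (1 - l) * \<bar>e q\<bar> + l * \<bar>\<Sum>r\<in>UNIV. m q r * e r\<bar>"
    using l by (simp add: abs_mult order.trans[OF abs_triangle_ineq])
  also have "\<dots> \<le> (1 - l) * (B * y q) + l * (B * ((1 - \<delta>) * y q))"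
    using l e offspring by (intro add_mono mult_left_mono) auto
  also have "\<dots> = (1 - l * \<delta>) * B * y q"
    by (simp add: algebra_simps)
  finally show ?thesis .
qed

lemma damped_iteration_error_bound:
  fixes x :: "nat \<Rightarrow> 't::finite \<Rightarrow> real" and m :: "'t \<Rightarrow> 't \<Rightarrow> real"
  assumes y_fix: "\<forall>q. y q = c q + (\<Sum>r\<in>UNIV. m q r * y r)" and m: "\<forall>q r. 0 \<le> m q r"
    and \<delta>: "\<forall>q. \<delta> * y q \<le> c q"
    and x: "\<forall>i q. x (Suc i) q = x i q + w i q * (c q + (\<Sum>r\<in>UNIV. m q r * x i r) - x i q)"
    and w: "\<forall>i q. 0 \<le> w i q \<and> w i q \<le> 1 \<and> \<theta> i \<le> w i q * \<delta>"
    and \<theta>: "\<forall>i. \<theta> i \<le> 1"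
    and B: "\<forall>r. \<bar>x 0 r - y r\<bar> \<le> B * y r" "0 \<le> B"
  shows "\<bar>x i q - y q\<bar> \<le> B * (\<Prod>k<i. 1 - \<theta> k) * y q"
proof (induction i arbitrary: q)
  case 0
  then show ?case using B by simp
next
  case (Suc i)
  let ?e = "\<lambda>r. x i r - y r" and ?B = "B * (\<Prod>k<i. 1 - \<theta> k)"
  have "x (Suc i) q - y q = (1 - w i q) * ?e q + w i q * (\<Sum>r\<in>UNIV. m q r * ?e r)"
    using x[rule_format, of i q] y_fix[rule_format, of q]
    by (simp add: right_diff_distrib sum_subtractf algebra_simps)
  also have "\<bar>\<dots>\<bar> \<le> (1 - w i q * \<delta>) * ?B * y q"
  proof (rule damped_update_error_bound[OF y_fix[rule_format] _ \<delta>[rule_format]])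
    show "0 \<le> B * (\<Prod>k<i. 1 - \<theta> k)"
      using B \<theta> by (simp add: prod_nonneg)
  qed (use Suc.IH m w in auto)
  also have "\<dots> \<le> (1 - \<theta> i) * ?B * y q"
    using Suc.IH[of q] w by (simp add: mult.assoc mult_right_mono)
  finally show ?case
    by (simp add: mult_ac)
qed

lemma cost_ratio_lower_bound:
  fixes c y :: "'t::finite \<Rightarrow> real"
  assumes c: "\<forall>r. 0 < c r" and c_le_y: "\<forall>r. c r \<le> y r"
  obtains \<delta> where "0 < \<delta>" "\<delta> \<le> 1" "\<forall>r. \<delta> * y r \<le> c r"
proof
  define \<delta> where "\<delta> = Min (range (\<lambda>r. c r / y r))"
  have y_pos: "0 < y r" for r
    using c c_le_y less_le_trans by blast
  have \<delta>_le: "\<delta> \<le> c r / y r" for r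
    unfolding \<delta>_def by (rule Min_le) auto
  show "0 < \<delta>"
    unfolding \<delta>_def using c y_pos by simp
  show "\<delta> \<le> 1"
    using \<delta>_le[of undefined] c_le_y y_pos by (metis divide_le_eq_1_pos order_trans)
  show "\<forall>r. \<delta> * y r \<le> c r"
    using \<delta>_le y_pos by (simp add: pos_le_divide_eq)
qed

lemma weighted_bound_exists:
  fixes e y :: "'t::finite \<Rightarrow> real"
  assumes y_pos: "\<forall>r. 0 < y r"
  obtains B where "0 \<le> B" "\<forall>r. \<bar>e r\<bar> \<le> B * y r"
proof
  define B where "B = Max (range (\<lambda>r. \<bar>e r\<bar> / y r))"
  have B_ge: "\<bar>e r\<bar> / y r \<le> B" for r
    unfolding B_def by (rule Max_ge) auto
  show "0 \<le> B"
    using B_ge[of undefined] y_pos by (meson order.trans divide_nonneg_pos abs_ge_zero)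
  show "\<forall>r. \<bar>e r\<bar> \<le> B * y r"
    using B_ge y_pos by (simp add: pos_divide_le_eq)
qed

lemma damped_fixpoint_iteration_tendsto:
  fixes x :: "nat \<Rightarrow> 't::finite \<Rightarrow> real" and m :: "'t \<Rightarrow> 't \<Rightarrow> real"
  assumes y_fix: "\<forall>q. y q = c q + (\<Sum>r\<in>UNIV. m q r * y r)" and y: "\<forall>q. 0 \<le> y q"
    and c: "\<forall>q. 0 < c q" and m: "\<forall>q r. 0 \<le> m q r"
    and x: "\<forall>i q. x (Suc i) q = x i q + w i q * (c q + (\<Sum>r\<in>UNIV. m q r * x i r) - x i q)"
    and w: "\<forall>i q. a * lr i \<le> w i q \<and> w i q \<le> 1"
    and "0 < a" and lr: "\<forall>i. 0 \<le> lr i" and "\<not> summable lr"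
  shows "(\<lambda>i. x i q) \<longlonglongrightarrow> y q"
proof -
  have "c r \<le> y r" for r
    using y_fix[rule_format, of r] m y sum_nonneg[of UNIV "\<lambda>s. m r s * y s"] by auto
  then have c_le_y: "\<forall>r. c r \<le> y r" ..
  obtain \<delta> where \<delta>: "0 < \<delta>" "\<delta> \<le> 1" "\<forall>r. \<delta> * y r \<le> c r"
    using cost_ratio_lower_bound[OF c c_le_y] .
  have y_pos: "\<forall>r. 0 < y r"
    using c c_le_y less_le_trans by blast
  obtain B where B: "0 \<le> B" "\<forall>r. \<bar>x 0 r - y r\<bar> \<le> B * y r"
    using weighted_bound_exists[OF y_pos, of "\<lambda>r. x 0 r - y r"] by blast
  define \<theta> where "\<theta> i = a * \<delta> * lr i" for i
  have w_nonneg: "0 \<le> w i q" for i q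
    using w \<open>0 < a\<close> lr by (meson order.trans less_imp_le mult_nonneg_nonneg)
  have \<theta>_le: "\<theta> i \<le> w i q * \<delta>" for i q
    unfolding \<theta>_def using w \<delta> by (simp add: mult_right_mono mult.commute mult.left_commute)
  have \<theta>: "\<forall>i. 0 \<le> \<theta> i \<and> \<theta> i \<le> 1"
  proof
    fix i
    have "w i q * \<delta> \<le> 1"
      using w \<delta> by (intro mult_le_one) auto
    then have "\<theta> i \<le> 1"
      using \<theta>_le[of i q] by linarith
    moreover have "0 \<le> \<theta> i"
      unfolding \<theta>_def using \<open>0 < a\<close> \<delta> lr by simp
    ultimately show "0 \<le> \<theta> i \<and> \<theta> i \<le> 1" by simp
  qed
  have "\<not> summable (\<lambda>i. a * \<delta> * lr i)"
    using \<open>0 < a\<close> \<delta>(1) \<open>\<not> summable lr\<close> by (simp add: summable_cmult_iff)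
  then have "(\<lambda>i. \<Prod>k<i. 1 - \<theta> k) \<longlonglongrightarrow> 0"
    using \<theta> by (intro prod_one_minus_tendsto_zero) (simp_all add: \<theta>_def)
  then have bound_tendsto: "(\<lambda>i. B * (\<Prod>k<i. 1 - \<theta> k) * y q) \<longlonglongrightarrow> 0"
    by (auto intro: tendsto_mult_left_zero tendsto_mult_right_zero)
  have "\<bar>x i q - y q\<bar> \<le> B * (\<Prod>k<i. 1 - \<theta> k) * y q" for i
    by (rule damped_iteration_error_bound[OF y_fix m \<delta>(3) x _ _ B(2,1)])
      (use w w_nonneg \<theta>_le \<theta> in auto)
  then have "(\<lambda>i. x i q - y q) \<longlonglongrightarrow> 0"
    by (intro Lim_null_comparison[OF _ bound_tendsto]) simp
  then show ?thesis
    by (rule LIM_zero_cancel)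
qed

definition offspring_mean :: "('t \<Rightarrow> 't list pmf) \<Rightarrow> 't \<Rightarrow> 't \<Rightarrow> real" where
  "offspring_mean p q r = measure_pmf.expectation (p q) (\<lambda>\<alpha>. real (count_list \<alpha> r))"

lemma offspring_mean_nonneg: "0 \<le> offspring_mean p q r"
  unfolding offspring_mean_def by simp

lemma sum_nth_eq_sum_count_list:
  fixes x :: "'t::finite \<Rightarrow> 'a::comm_semiring_1"
  shows "(\<Sum>j<length \<alpha>. x (\<alpha> ! j)) = (\<Sum>r\<in>UNIV. of_nat (count_list \<alpha> r) * x r)"
proof -
  have "sum_list (map x \<alpha>) = (\<Sum>r\<in>UNIV. of_nat (count_list \<alpha> r) * x r)"
  proof (induction \<alpha>)
    case (Cons a \<alpha>)
    have "of_nat (count_list (a # \<alpha>) r) * x r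
            = (if a = r then x r else 0) + of_nat (count_list \<alpha> r) * x r"
      for r by (simp add: distrib_right)
    then show ?case
      by (simp add: Cons.IH sum.distrib)
  qed simp
  then show ?thesis
    by (simp add: sum_list_sum_nth atLeast0LessThan)
qed

lemma expectation_offspring_sum:
  fixes p :: "'t::finite \<Rightarrow> 't list pmf"
  assumes "finite (set_pmf (p q))"
  shows "measure_pmf.expectation (p q) (\<lambda>\<alpha>. \<Sum>j<length \<alpha>. x (\<alpha> ! j))
           = (\<Sum>r\<in>UNIV. offspring_mean p q r * x r)"
  unfolding sum_nth_eq_sum_count_list offspring_mean_def
  using assms by (simp add: integrable_measure_pmf_finite)

lemma cstar_fixpoint:
  fixes p :: "'t::finite \<Rightarrow> 't list pmf"
  assumes "bmc p c" and "\<forall>q. cstar p c q < \<infinity>"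
  shows "enn2real (cstar p c q) = c q + (\<Sum>r\<in>UNIV. offspring_mean p q r * enn2real (cstar p c r))"
proof -
  let ?y = "\<lambda>r. enn2real (cstar p c r)"
  let ?S = "\<Sum>r\<in>UNIV. offspring_mean p q r * ?y r"
  have fin: "finite (set_pmf (p q))" and "c q > 0" using assms(1) by (auto simp: bmc_def)
  have S_nonneg: "0 \<le> ?S" by (simp add: sum_nonneg offspring_mean_nonneg)
  have "mono (bmc_F p c)"
    unfolding bmc_F_def mono_def le_fun_def
    by (auto intro!: add_left_mono nn_integral_mono sum_mono)
  moreover have "cstar p c = (\<lambda>r. ennreal (?y r))"
    using assms(2) by (simp add: fun_eq_iff)
  ultimately have "cstar p c q = bmc_F p c (\<lambda>r. ennreal (?y r)) q"
    unfolding cstar_def by (metis lfp_unfold)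
  also have "\<dots> = ennreal (c q) + (\<integral>\<^sup>+\<alpha>. ennreal (\<Sum>j<length \<alpha>. ?y (\<alpha> ! j)) \<partial>p q)"
    unfolding bmc_F_def by (simp add: sum_ennreal)
  also have "\<dots> = ennreal (c q)
      + ennreal (measure_pmf.expectation (p q) (\<lambda>\<alpha>. \<Sum>j<length \<alpha>. ?y (\<alpha> ! j)))"
    using fin by (simp add: nn_integral_eq_integral integrable_measure_pmf_finite sum_nonneg)
  also have "\<dots> = ennreal (c q) + ennreal ?S"
    using expectation_offspring_sum[of p q ?y, OF fin] by simp
  also have "\<dots> = ennreal (c q + ?S)"
    using \<open>c q > 0\<close> S_nonneg by (simp add: ennreal_plus)
  finally show ?thesis
    using \<open>c q > 0\<close> S_nonneg by simp
qed

lemma expectation_bind_pmf_finite: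
  fixes h :: "'b \<Rightarrow> real"
  assumes "finite (set_pmf M)" and "\<And>x. x \<in> set_pmf M \<Longrightarrow> finite (set_pmf (N x))"
  shows "measure_pmf.expectation (M \<bind> N) h
           = measure_pmf.expectation M (\<lambda>x. measure_pmf.expectation (N x) h)"
  using assms by (simp add: pmf_expectation_bind[of "set_pmf M"] integral_measure_pmf_real mult.commute)

definition q_step :: "('t \<Rightarrow> 't list pmf) \<Rightarrow> ('t \<Rightarrow> real) \<Rightarrow> 't pmf \<Rightarrow> real
    \<Rightarrow> ('t \<Rightarrow> real) \<Rightarrow> ('t \<Rightarrow> real) pmf" where
  "q_step p c P l Q = P \<bind> (\<lambda>q. map_pmf
     (\<lambda>\<beta>. Q(q := (1 - l) * Q q + l * (c q + (\<Sum>j<length \<beta>. Q (\<beta> ! j))))) (p q))"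

lemma qdist_Suc: "qdist p c P lr Q0 (Suc i) = qdist p c P lr Q0 i \<bind> q_step p c P (lr i)"
  by (simp add: q_step_def[abs_def])

lemma finite_set_q_step:
  assumes "\<forall>q. finite (set_pmf (p q))"
  shows "finite (set_pmf (q_step p c (P::'t::finite pmf) l Q))"
  using assms by (simp add: q_step_def set_bind_pmf)

lemma finite_set_qdist:
  assumes "\<forall>q. finite (set_pmf (p q))"
  shows "finite (set_pmf (qdist p c (P::'t::finite pmf) lr Q0 i))"
  by (induction i) (auto simp: set_bind_pmf assms)

lemma expectation_q_step:
  fixes p :: "'t::finite \<Rightarrow> 't list pmf"
  assumes fin: "\<forall>q. finite (set_pmf (p q))"
  shows "measure_pmf.expectation (q_step p c P l Q) (\<lambda>Q'. Q' q)
         = Q q + l * pmf P q * (c q + (\<Sum>r\<in>UNIV. offspring_mean p q r * Q r) - Q q)"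
proof -
  let ?d = "c q + (\<Sum>r\<in>UNIV. offspring_mean p q r * Q r) - Q q"
  have "measure_pmf.expectation (p q) (\<lambda>\<beta>. (1 - l) * Q q + l * (c q + (\<Sum>j<length \<beta>. Q (\<beta> ! j))))
          = (1 - l) * Q q + l * (c q + measure_pmf.expectation (p q) (\<lambda>\<beta>. \<Sum>j<length \<beta>. Q (\<beta> ! j)))"
    using fin by (simp add: integrable_measure_pmf_finite)
  then have update: "measure_pmf.expectation (p q')
      (\<lambda>\<beta>. (Q(q' := (1 - l) * Q q' + l * (c q' + (\<Sum>j<length \<beta>. Q (\<beta> ! j))))) q)
      = Q q + (if q' = q then l * ?d else 0)" for q'
    using expectation_offspring_sum[of p q Q] fin by (auto simp: algebra_simps)
  have "measure_pmf.expectation (q_step p c P l Q) (\<lambda>Q'. Q' q)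
          = (\<Sum>q'\<in>UNIV. pmf P q' * (Q q + (if q' = q then l * ?d else 0)))"
    unfolding q_step_def using fin
    by (simp add: pmf_expectation_bind[of UNIV] update del: fun_upd_apply)
  also have "\<dots> = Q q * (\<Sum>q'\<in>UNIV. pmf P q') + pmf P q * (l * ?d)"
    by (simp only: distrib_left sum.distrib)
      (simp add: sum_distrib_left[symmetric] if_distrib mult.commute[of _ "Q q"] cong: if_cong)
  finally show ?thesis
    by (simp add: sum_pmf_eq_1)
qed

lemma EQ_Suc:
  fixes p :: "'t::finite \<Rightarrow> 't list pmf"
  assumes fin: "\<forall>q. finite (set_pmf (p q))"
  shows "EQ p c P lr Q0 (Suc i) q = EQ p c P lr Q0 i q + lr i * pmf P q *
           (c q + (\<Sum>r\<in>UNIV. offspring_mean p q r * EQ p c P lr Q0 i r) - EQ p c P lr Q0 i q)"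
proof -
  let ?X = "qdist p c P lr Q0 i"
  have finX: "finite (set_pmf ?X)"
    using finite_set_qdist[OF fin] .
  have "EQ p c P lr Q0 (Suc i) q
          = measure_pmf.expectation ?X (\<lambda>Q. measure_pmf.expectation (q_step p c P (lr i) Q) (\<lambda>Q'. Q' q))"
    unfolding EQ_def qdist_Suc using finX finite_set_q_step[OF fin]
    by (rule expectation_bind_pmf_finite)
  also have "\<dots> = measure_pmf.expectation ?X
          (\<lambda>Q. Q q + lr i * pmf P q * (c q + (\<Sum>r\<in>UNIV. offspring_mean p q r * Q r) - Q q))"
    by (simp only: expectation_q_step[OF fin])
  finally show ?thesis
    using finX by (simp add: EQ_def integrable_measure_pmf_finite algebra_simps)
qed

theorem theorem4:
  fixes p :: "'t::finite \<Rightarrow> 't list pmf" and c :: "'t \<Rightarrow> real"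
    and P :: "'t pmf" and lr :: "nat \<Rightarrow> real" and pmin :: real and Q0 :: "'t \<Rightarrow> real"
  assumes "bmc p c"
    and "\<forall>q. cstar p c q < \<infinity>"
    and "\<forall>i. 0 \<le> lr i \<and> lr i \<le> 1"
    and "\<not> summable lr"
    and "pmin > 0" and "\<forall>q. pmf P q \<ge> pmin"
    and "\<forall>q. Q0 q \<ge> 0"
  shows "\<forall>q. (\<lambda>i. EQ p c P lr Q0 i q) \<longlonglongrightarrow> enn2real (cstar p c q)"
proof
  fix q
  have fin: "\<forall>q. finite (set_pmf (p q))" and c: "\<forall>q. 0 < c q"
    using assms(1) by (auto simp: bmc_def)
  have rate: "pmin * lr i \<le> lr i * pmf P q \<and> lr i * pmf P q \<le> 1" for i q
    using assms(3,6) mult_right_mono[of pmin "pmf P q" "lr i"] by (auto simp: mult.commute mult_le_one pmf_le_1)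
  show "(\<lambda>i. EQ p c P lr Q0 i q) \<longlonglongrightarrow> enn2real (cstar p c q)"
  proof (rule damped_fixpoint_iteration_tendsto[where m = "offspring_mean p" and w = "\<lambda>i q. lr i * pmf P q"])
    show "\<forall>q. enn2real (cstar p c q) = c q + (\<Sum>r\<in>UNIV. offspring_mean p q r * enn2real (cstar p c r))"
      using cstar_fixpoint[OF assms(1,2)] by blast
    show "\<forall>i q. EQ p c P lr Q0 (Suc i) q = EQ p c P lr Q0 i q + lr i * pmf P q *
            (c q + (\<Sum>r\<in>UNIV. offspring_mean p q r * EQ p c P lr Q0 i r) - EQ p c P lr Q0 i q)"
      using EQ_Suc[OF fin] by blast
  qed (use assms(3-5) c rate offspring_mean_nonneg in auto)
qed

end
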